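(* Let $G$ be a finite connected multigraph (multiple edges and self-loops allowed) with $n\ge2$ vertices, having two distinct distinguished vertices $v_A,v_B$ of degree $3$ while every other vertex has degree $4$ (a connected two-point $\phi^4$ graph; $v_A,v_B$ are its external vertices, each carrying one external leg). Suppose $G$ contains no generalized tadpole subgraph. Then there exists an exhausting sequence of cuts for $G$, i.e. a sequence of vertex sets $\emptyset=A_0\subsetneq A_1\subsetneq\cdots\subsetneq A_{n-1}\subsetneq A_n=V(G)$ such that for every $p=1,\dots,n-1$, $(A_p,B_p:=V(G)\setminus A_p)$ is an $(A,B)$-cut of $G$.
   Context: A set $S$ of vertices of $G$ is connected if the subgraph consisting of the vertices of $S$ and all lines of $G$ with both ends in $S$ (its inner lines) is connected. For a connected vertex set $S$, its external half-lines are the half-lines (including external legs of $v_A,v_B$) at vertices of $S$ that do not belong to inner lines of $S$. A generalized tadpole subgraph is a connected vertex set $S$ with exactly two external half-lines, both attached to the same vertex of $S$. An $(A,B)$-cut of $G$ is a partition of the vertex set of $G$ into two sets $A$ and $B$ with $v_A\in A$, $v_B\in B$, and both $A$ and $B$ connected. *)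

theory Defs
  imports Main
begin

text \<open>A finite multigraph is given by a vertex set V, a line set E and two end maps
  src, tgt (a self-loop has src e = tgt e). Half-lines are pairs (e, b) with b selecting
  an end of e; the two external vertices vA, vB each carry one external leg.\<close>

datatype ('v, 'e) halfline = Internal 'e bool | Leg 'v

definition multigraph :: "'v set \<Rightarrow> 'e set \<Rightarrow> ('e \<Rightarrow> 'v) \<Rightarrow> ('e \<Rightarrow> 'v) \<Rightarrow> bool" where
  "multigraph V E src tgt \<longleftrightarrow> finite V \<and> finite E \<and> (\<forall>e\<in>E. src e \<in> V \<and> tgt e \<in> V)"

fun attach :: "('e \<Rightarrow> 'v) \<Rightarrow> ('e \<Rightarrow> 'v) \<Rightarrow> ('v, 'e) halfline \<Rightarrow> 'v" where
  "attach src tgt (Internal e b) = (if b then src e else tgt e)"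
| "attach src tgt (Leg v) = v"

text \<open>Degree of a vertex: number of line half-lines at it (a self-loop counts twice).\<close>
definition degree :: "'e set \<Rightarrow> ('e \<Rightarrow> 'v) \<Rightarrow> ('e \<Rightarrow> 'v) \<Rightarrow> 'v \<Rightarrow> nat" where
  "degree E src tgt v = card {(e, b). e \<in> E \<and> attach src tgt (Internal e b) = v}"

definition inner_adj :: "'e set \<Rightarrow> ('e \<Rightarrow> 'v) \<Rightarrow> ('e \<Rightarrow> 'v) \<Rightarrow> 'v set \<Rightarrow> ('v \<times> 'v) set" where
  "inner_adj E src tgt S = {(x, y). \<exists>e\<in>E. src e \<in> S \<and> tgt e \<in> S \<and>
       ((x = src e \<and> y = tgt e) \<or> (x = tgt e \<and> y = src e))}"

definition connected_set :: "'e set \<Rightarrow> ('e \<Rightarrow> 'v) \<Rightarrow> ('e \<Rightarrow> 'v) \<Rightarrow> 'v set \<Rightarrow> bool" where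
  "connected_set E src tgt S \<longleftrightarrow> S \<noteq> {} \<and>
     (\<forall>x\<in>S. \<forall>y\<in>S. (x, y) \<in> (inner_adj E src tgt S)\<^sup>*)"

definition ext_halflines :: "'e set \<Rightarrow> ('e \<Rightarrow> 'v) \<Rightarrow> ('e \<Rightarrow> 'v) \<Rightarrow> 'v \<Rightarrow> 'v \<Rightarrow> 'v set
     \<Rightarrow> ('v, 'e) halfline set" where
  "ext_halflines E src tgt vA vB S =
     {Internal e b | e b. e \<in> E \<and> attach src tgt (Internal e b) \<in> S \<and> \<not> (src e \<in> S \<and> tgt e \<in> S)}
     \<union> {Leg v | v. v \<in> {vA, vB} \<and> v \<in> S}"

definition generalized_tadpole :: "'e set \<Rightarrow> ('e \<Rightarrow> 'v) \<Rightarrow> ('e \<Rightarrow> 'v) \<Rightarrow> 'v \<Rightarrow> 'v \<Rightarrow> 'v set \<Rightarrow> bool" where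
  "generalized_tadpole E src tgt vA vB S \<longleftrightarrow> connected_set E src tgt S \<and>
     card (ext_halflines E src tgt vA vB S) = 2 \<and>
     (\<exists>v\<in>S. \<forall>h\<in>ext_halflines E src tgt vA vB S. attach src tgt h = v)"

definition AB_cut :: "'v set \<Rightarrow> 'e set \<Rightarrow> ('e \<Rightarrow> 'v) \<Rightarrow> ('e \<Rightarrow> 'v) \<Rightarrow> 'v \<Rightarrow> 'v \<Rightarrow> 'v set \<Rightarrow> 'v set \<Rightarrow> bool" where
  "AB_cut V E src tgt vA vB A B \<longleftrightarrow> A \<union> B = V \<and> A \<inter> B = {} \<and> vA \<in> A \<and> vB \<in> B \<and>
     connected_set E src tgt A \<and> connected_set E src tgt B"

definition exhausting_sequence_of_cuts ::
  "'v set \<Rightarrow> 'e set \<Rightarrow> ('e \<Rightarrow> 'v) \<Rightarrow> ('e \<Rightarrow> 'v) \<Rightarrow> 'v \<Rightarrow> 'v \<Rightarrow> (nat \<Rightarrow> 'v set) \<Rightarrow> bool" where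
  "exhausting_sequence_of_cuts V E src tgt vA vB A \<longleftrightarrow>
     A 0 = {} \<and> A (card V) = V \<and> (\<forall>i < card V. A i \<subset> A (Suc i)) \<and>
     (\<forall>p. 1 \<le> p \<and> p \<le> card V - 1 \<longrightarrow> AB_cut V E src tgt vA vB (A p) (V - A p))"

end

theory Submission
  imports Defs
begin

text \<open>Cuts are built greedily. Starting from A = {vA}, one repeatedly moves into A a vertex x of
  the current B = V - A that is adjacent to A, differs from vB, and whose removal leaves B connected.
  If no such x existed, removing a vertex would cut off a pocket of B - {vB}, and passing to ever
  smaller pockets one reaches a connected K \<subseteq> V - {vA, vB} all of whose neighbours lie in K or
  at a single vertex v. All vertices of K have degree 4, so K has an even, nonzero number of
  external half-lines, all ending at v; then K \<union> {v} has exactly two external half-lines, both at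
  v (counting the external leg if v is external), i.e. it is a generalized tadpole.\<close>

locale graph_ends =
  fixes E :: "'e set" and src tgt :: "'e \<Rightarrow> 'v"
begin

definition adjacent :: "'v \<Rightarrow> 'v \<Rightarrow> bool" where
  "adjacent a w \<longleftrightarrow> (\<exists>e\<in>E. (src e = a \<and> tgt e = w) \<or> (src e = w \<and> tgt e = a))"

lemma adjacent_sym: "adjacent a w \<Longrightarrow> adjacent w a"
  unfolding adjacent_def by auto

lemma adjacent_ends:
  "e \<in> E \<Longrightarrow> adjacent (attach src tgt (Internal e b)) (attach src tgt (Internal e (\<not> b)))"
  unfolding adjacent_def by auto

definition neighbours :: "'v set \<Rightarrow> 'v set" where
  "neighbours S = {w. \<exists>a\<in>S. adjacent a w}"

lemma neighboursI: "a \<in> S \<Longrightarrow> adjacent a w \<Longrightarrow> w \<in> neighbours S"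
  unfolding neighbours_def by blast

lemma inner_adj_iff: "(a, w) \<in> inner_adj E src tgt S \<longleftrightarrow> a \<in> S \<and> w \<in> S \<and> adjacent a w"
  unfolding inner_adj_def adjacent_def by auto

lemma sym_inner_adj: "sym (inner_adj E src tgt S)"
  by (rule symI) (simp add: inner_adj_iff adjacent_sym)

lemma inner_adj_mono: "S \<subseteq> T \<Longrightarrow> inner_adj E src tgt S \<subseteq> inner_adj E src tgt T"
  by (auto simp: inner_adj_iff)

definition component :: "'v set \<Rightarrow> 'v \<Rightarrow> 'v set" where
  "component S r = {z. (r, z) \<in> (inner_adj E src tgt S)\<^sup>*}"

lemma root_in_component: "r \<in> component S r"
  by (simp add: component_def)

lemma component_sym: "z \<in> component S r \<Longrightarrow> r \<in> component S z"
  unfolding component_def using symD[OF sym_rtrancl[OF sym_inner_adj]] by blast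

lemma component_eq: "z \<in> component S r \<Longrightarrow> component S z = component S r"
  using component_sym unfolding component_def by (blast intro: rtrancl_trans)

lemma component_mono: "S \<subseteq> T \<Longrightarrow> component S r \<subseteq> component T r"
  unfolding component_def using rtrancl_mono[OF inner_adj_mono] by blast

lemma component_subset:
  assumes "r \<in> S" shows "component S r \<subseteq> S"
proof
  fix z assume "z \<in> component S r"
  then have "(r, z) \<in> (inner_adj E src tgt S)\<^sup>*" by (simp add: component_def)
  then show "z \<in> S" by (induction rule: rtrancl_induct) (use assms in \<open>auto simp: inner_adj_iff\<close>)
qed

lemma component_adjacent:
  assumes "r \<in> S" "a \<in> component S r" "w \<in> S" "adjacent a w"
  shows "w \<in> component S r"
proof -
  have "(a, w) \<in> inner_adj E src tgt S"
    using assms component_subset by (auto simp: inner_adj_iff)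
  then show ?thesis using assms(2) unfolding component_def by (simp add: rtrancl_into_rtrancl)
qed

lemma connected_set_iff_subset_component:
  assumes "r \<in> S" shows "connected_set E src tgt S \<longleftrightarrow> S \<subseteq> component S r"
proof
  assume "connected_set E src tgt S"
  then show "S \<subseteq> component S r" using assms by (auto simp: connected_set_def component_def)
next
  assume sub: "S \<subseteq> component S r"
  have "(x, y) \<in> (inner_adj E src tgt S)\<^sup>*" if "x \<in> S" "y \<in> S" for x y
  proof -
    have "r \<in> component S x" "y \<in> component S r" using sub that component_sym by blast+
    then show ?thesis unfolding component_def by (blast intro: rtrancl_trans)
  qed
  then show "connected_set E src tgt S" using assms by (auto simp: connected_set_def)
qed

lemma connected_subset_component:
  assumes "connected_set E src tgt T" "T \<subseteq> S" "r \<in> T"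
  shows "T \<subseteq> component S r"
  using connected_set_iff_subset_component[of r T] component_mono[of T S r] assms by blast

lemma connected_component:
  assumes "r \<in> S" shows "connected_set E src tgt (component S r)"
proof -
  let ?C = "component S r"
  have "(r, z) \<in> (inner_adj E src tgt ?C)\<^sup>*" if "(r, z) \<in> (inner_adj E src tgt S)\<^sup>*" for z
    using that
  proof (induction rule: rtrancl_induct)
    case (step y z)
    then have "y \<in> ?C" "z \<in> ?C" by (auto simp: component_def intro: rtrancl_into_rtrancl)
    then have "(y, z) \<in> inner_adj E src tgt ?C" using step by (auto simp: inner_adj_iff)
    then show ?case using step by (meson rtrancl_into_rtrancl)
  qed simp
  then show ?thesis
    by (subst connected_set_iff_subset_component[OF root_in_component]) (auto simp: component_def)
qed

lemma connected_set_edge_leaving: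
  assumes "connected_set E src tgt W" "T \<subseteq> W" "a \<in> T" "b \<in> W" "b \<notin> T"
  shows "\<exists>x\<in>T. \<exists>w\<in>W - T. adjacent x w"
proof -
  have "(a, b) \<in> (inner_adj E src tgt W)\<^sup>*"
    using assms unfolding connected_set_def by blast
  then show ?thesis using \<open>b \<notin> T\<close>
  proof (induction rule: rtrancl_induct)
    case (step y z)
    then show ?case by (cases "y \<in> T") (auto simp: inner_adj_iff)
  qed (use assms in simp)
qed

lemma connected_set_insert:
  assumes "connected_set E src tgt A" "a \<in> A" "adjacent a x"
  shows "connected_set E src tgt (insert x A)"
proof -
  have "A \<subseteq> component (insert x A) a"
    using assms by (intro connected_subset_component) auto
  moreover have "x \<in> component (insert x A) a"
    using assms by (intro component_adjacent[OF _ root_in_component]) auto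
  ultimately show ?thesis
    using assms(2) by (intro connected_set_iff_subset_component[THEN iffD2]) auto
qed

lemma connected_set_Diff_pocket:
  assumes B: "connected_set E src tgt B" and K: "K \<subseteq> B" and v: "v \<in> B" "v \<notin> K"
    and attached: "neighbours K \<inter> B \<subseteq> insert v K"
  shows "connected_set E src tgt (B - K)"
proof -
  let ?T = "component (B - K) v"
  have "B - K \<subseteq> ?T"
  proof
    fix z assume z: "z \<in> B - K"
    show "z \<in> ?T"
    proof (rule ccontr)
      assume "z \<notin> ?T"
      moreover have "?T \<union> K \<subseteq> B" using component_subset[of v "B - K"] K v by blast
      ultimately obtain x w where x: "x \<in> ?T \<union> K" and w: "w \<in> B" "w \<notin> ?T \<union> K" "adjacent x w"
        using connected_set_edge_leaving[OF B, of "?T \<union> K" v z] z root_in_component by blast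
      show False
      proof (cases "x \<in> K")
        case True
        then have "w = v" using attached w neighboursI[OF True w(3)] by blast
        then show False using w(2) root_in_component by blast
      next
        case False
        then have "x \<in> ?T" using x by blast
        moreover have "w \<in> B - K" using w by blast
        ultimately have "w \<in> ?T" using component_adjacent[of v "B - K" x w] v w(3) by blast
        then show False using w(2) by blast
      qed
    qed
  qed
  with v show ?thesis by (intro connected_set_iff_subset_component[THEN iffD2]) auto
qed

definition half_lines_at :: "'v \<Rightarrow> ('e \<times> bool) set" where
  "half_lines_at x = {(e, b). e \<in> E \<and> attach src tgt (Internal e b) = x}"

definition boundary :: "'v set \<Rightarrow> ('e \<times> bool) set" where
  "boundary S = {(e, b). e \<in> E \<and> attach src tgt (Internal e b) \<in> S \<and> \<not> (src e \<in> S \<and> tgt e \<in> S)}"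

lemma degree_eq_card_half_lines_at: "degree E src tgt x = card (half_lines_at x)"
  by (simp add: degree_def half_lines_at_def)

lemma finite_half_lines_at: "finite E \<Longrightarrow> finite (half_lines_at x)"
  by (rule finite_subset[of _ "E \<times> UNIV"]) (auto simp: half_lines_at_def)

lemma finite_boundary: "finite E \<Longrightarrow> finite (boundary S)"
  by (rule finite_subset[of _ "E \<times> UNIV"]) (auto simp: boundary_def)

lemma ext_halflines_eq:
  "ext_halflines E src tgt vA vB S = case_prod Internal ` boundary S \<union> Leg ` (S \<inter> {vA, vB})"
  by (auto simp: ext_halflines_def boundary_def)

lemma card_ext_halflines:
  assumes "finite E"
  shows "card (ext_halflines E src tgt vA vB S) = card (boundary S) + card (S \<inter> {vA, vB})"
proof -
  have "card (case_prod Internal ` boundary S :: ('v, 'e) halfline set) = card (boundary S)"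
    by (rule card_image) (auto simp: inj_on_def)
  moreover have "card (Leg ` (S \<inter> {vA, vB}) :: ('v, 'e) halfline set) = card (S \<inter> {vA, vB})"
    by (rule card_image) (simp add: inj_on_def)
  moreover have "card (ext_halflines E src tgt vA vB S)
      = card (case_prod Internal ` boundary S :: ('v, 'e) halfline set)
        + card (Leg ` (S \<inter> {vA, vB}) :: ('v, 'e) halfline set)"
    unfolding ext_halflines_eq by (rule card_Un_disjoint) (auto simp: finite_boundary assms)
  ultimately show ?thesis by simp
qed

lemma sum_degree_eq:
  assumes "finite E" "finite S"
  shows "(\<Sum>x\<in>S. degree E src tgt x) = 2 * card {e\<in>E. src e \<in> S \<and> tgt e \<in> S} + card (boundary S)"
proof -
  have "(\<Sum>x\<in>S. degree E src tgt x) = card (\<Union>x\<in>S. half_lines_at x)"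
    unfolding degree_eq_card_half_lines_at
    by (rule card_UN_disjoint[symmetric])
      (simp_all add: assms finite_half_lines_at, auto simp: half_lines_at_def)
  also have "(\<Union>x\<in>S. half_lines_at x) = {e\<in>E. src e \<in> S \<and> tgt e \<in> S} \<times> UNIV \<union> boundary S"
    by (auto simp: half_lines_at_def boundary_def split: if_splits)
  also have "card \<dots> = 2 * card {e\<in>E. src e \<in> S \<and> tgt e \<in> S} + card (boundary S)"
    by (subst card_Un_disjoint)
      (simp_all add: assms finite_boundary card_cartesian_product, auto simp: boundary_def)
  finally show ?thesis .
qed

lemma boundary_nonempty:
  assumes "a \<in> S" "w \<notin> S" "adjacent a w"
  shows "boundary S \<noteq> {}"
proof -
  obtain e where "e \<in> E" "(src e = a \<and> tgt e = w) \<or> (src e = w \<and> tgt e = a)"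
    using assms(3) unfolding adjacent_def by blast
  then have "(e, src e = a) \<in> boundary S" using assms by (auto simp: boundary_def)
  then show ?thesis by blast
qed

lemma boundary_insert_subset:
  assumes "neighbours K \<subseteq> insert v K"
  shows "boundary (insert v K) \<subseteq> half_lines_at v"
proof clarify
  fix e b assume eb: "(e, b) \<in> boundary (insert v K)"
  then have "e \<in> E" by (simp add: boundary_def)
  then have "attach src tgt (Internal e b) \<in> K \<Longrightarrow> attach src tgt (Internal e (\<not> b)) \<in> insert v K"
    using assms adjacent_ends neighboursI by blast
  then show "(e, b) \<in> half_lines_at v"
    using eb by (auto simp: boundary_def half_lines_at_def split: if_splits)
qed

lemma card_boundary_insert_le:
  assumes "finite E" and closed: "neighbours K \<subseteq> insert v K"
  shows "card (boundary (insert v K)) + card (boundary K) \<le> degree E src tgt v"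
proof -
  \<comment> \<open>flipping maps the boundary half-lines of K injectively to half-lines at v
    that are inner in K \<union> {v}\<close>
  let ?flip = "\<lambda>(e, b). (e, \<not> b)"
  have other_end: "attach src tgt (Internal e (\<not> b)) = v" if "(e, b) \<in> boundary K" for e b
  proof -
    have "e \<in> E" "attach src tgt (Internal e b) \<in> K" using that by (auto simp: boundary_def)
    then have "attach src tgt (Internal e (\<not> b)) \<in> insert v K"
      using closed adjacent_ends neighboursI by blast
    then show ?thesis using that by (auto simp: boundary_def split: if_splits)
  qed
  have "(e, \<not> b) \<in> half_lines_at v" if "(e, b) \<in> boundary K" for e b
    using that other_end[OF that] by (auto simp: half_lines_at_def boundary_def)
  then have "?flip ` boundary K \<subseteq> half_lines_at v" by auto
  moreover have "(e, \<not> b) \<notin> boundary (insert v K)" if "(e, b) \<in> boundary K" for e b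
    using that other_end[OF that] by (auto simp: boundary_def split: if_splits)
  then have "?flip ` boundary K \<inter> boundary (insert v K) = {}" by auto
  moreover have "card (?flip ` boundary K) = card (boundary K)"
    by (rule card_image) (auto simp: inj_on_def)
  ultimately show ?thesis
    using boundary_insert_subset[OF closed] card_mono[OF finite_half_lines_at[OF \<open>finite E\<close>]]
      card_Un_disjoint[OF finite_boundary finite_imageI[OF finite_boundary]] \<open>finite E\<close>
    by (metis (no_types, lifting) Int_commute Un_least add.commute degree_eq_card_half_lines_at)
qed

end

locale phi4_graph = graph_ends E src tgt
  for V :: "'v set" and E :: "'e set" and src tgt :: "'e \<Rightarrow> 'v" and vA vB :: 'v +
  assumes multigraph: "multigraph V E src tgt"
    and connected_V: "connected_set E src tgt V"
    and vA: "vA \<in> V" and vB: "vB \<in> V" and vA_neq_vB: "vA \<noteq> vB"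
    and degree_vA: "degree E src tgt vA = 3" and degree_vB: "degree E src tgt vB = 3"
    and degree_internal: "\<forall>v\<in>V - {vA, vB}. degree E src tgt v = 4"
    and no_tadpole: "\<not> (\<exists>S \<subseteq> V. generalized_tadpole E src tgt vA vB S)"
begin

lemma finite_V: "finite V" and finite_E: "finite E"
  using multigraph by (auto simp: multigraph_def)

lemma adjacent_in_V: "adjacent a w \<Longrightarrow> w \<in> V"
  using multigraph by (auto simp: multigraph_def adjacent_def)

lemma even_card_boundary:
  assumes "S \<subseteq> V - {vA, vB}" shows "even (card (boundary S))"
proof -
  have "finite S" using assms finite_V finite_subset by blast
  have "(\<Sum>x\<in>S. degree E src tgt x) = 4 * card S"
    using assms degree_internal by (simp add: subset_iff)
  then have "4 * card S = 2 * card {e\<in>E. src e \<in> S \<and> tgt e \<in> S} + card (boundary S)"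
    using sum_degree_eq[OF finite_E \<open>finite S\<close>] by simp
  then have "even (2 * card {e\<in>E. src e \<in> S \<and> tgt e \<in> S} + card (boundary S))"
    by (metis even_mult_iff even_numeral)
  then show ?thesis by simp
qed

lemma closed_pocket_is_tadpole:
  assumes K: "K \<subseteq> V - {vA, vB}" "connected_set E src tgt K" and v: "v \<in> V" "v \<notin> K"
    and closed: "neighbours K \<subseteq> insert v K" and u: "u \<in> V" "u \<notin> insert v K"
  shows "generalized_tadpole E src tgt vA vB (insert v K)"
proof -
  let ?S = "insert v K"
  obtain k where "k \<in> K" using K(2) by (auto simp: connected_set_def)
  then obtain a w where a: "a \<in> K" and w: "w \<in> V - K" "adjacent a w"
    using connected_set_edge_leaving[OF connected_V, of K k v] K v by blast
  then have av: "adjacent a v" using closed neighboursI by blast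
  have connected_S: "connected_set E src tgt ?S"
    using connected_set_insert[OF K(2) a av] .
  have "boundary K \<noteq> {}" using boundary_nonempty[OF a v(2) av] .
  then have "card (boundary K) \<noteq> 0" using finite_boundary[OF finite_E] by simp
  then have boundary_K: "card (boundary K) \<ge> 2" using even_card_boundary[OF K(1)] dvd_imp_le by blast
  obtain a' w' where "a' \<in> ?S" "w' \<notin> ?S" "adjacent a' w'"
    using connected_set_edge_leaving[OF connected_V, of ?S v u] K v u by blast
  then have "boundary ?S \<noteq> {}" by (rule boundary_nonempty)
  then have boundary_S: "card (boundary ?S) \<ge> 1"
    using finite_boundary[OF finite_E] by (simp add: Suc_le_eq card_gt_0_iff)
  have count: "card (boundary ?S) + card (boundary K) \<le> degree E src tgt v"
    using card_boundary_insert_le[OF finite_E closed] .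
  have legs: "?S \<inter> {vA, vB} = (if v \<in> {vA, vB} then {v} else {})" using K(1) by auto
  have "card (ext_halflines E src tgt vA vB ?S) = 2"
  proof (cases "v \<in> {vA, vB}")
    case True
    then have "degree E src tgt v = 3" using degree_vA degree_vB by auto
    then have "card (boundary ?S) = 1" using count boundary_K boundary_S by linarith
    moreover have "?S \<inter> {vA, vB} = {v}" using True legs by simp
    ultimately show ?thesis by (simp add: card_ext_halflines[OF finite_E])
  next
    case False
    then have "degree E src tgt v = 4" using degree_internal v by auto
    moreover have "even (card (boundary ?S))" using False K(1) v by (intro even_card_boundary) auto
    moreover have "card (boundary ?S) \<ge> 2" using calculation(2) boundary_S dvd_imp_le by auto
    ultimately have "card (boundary ?S) = 2" using count boundary_K by linarith
    moreover have "?S \<inter> {vA, vB} = {}" using False legs by simp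
    ultimately show ?thesis by (simp add: card_ext_halflines[OF finite_E])
  qed
  moreover have "attach src tgt h = v" if "h \<in> ext_halflines E src tgt vA vB ?S" for h
  proof -
    have "h \<in> case_prod Internal ` half_lines_at v \<or> h \<in> Leg ` {v}"
      using that boundary_insert_subset[OF closed] legs unfolding ext_halflines_eq
      by (auto split: if_splits)
    then show ?thesis by (auto simp: half_lines_at_def)
  qed
  ultimately show ?thesis using connected_S unfolding generalized_tadpole_def by blast
qed

lemma connected_V_minus_vA: "connected_set E src tgt (V - {vA})"
proof (rule ccontr)
  assume "\<not> ?thesis"
  then have "\<not> V - {vA} \<subseteq> component (V - {vA}) vB"
    using connected_set_iff_subset_component[of vB "V - {vA}"] vB vA_neq_vB by simp
  then obtain y where y: "y \<in> V - {vA}" "y \<notin> component (V - {vA}) vB" by blast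
  let ?K = "component (V - {vA}) y"
  have "vB \<notin> ?K" using y(2) component_sym by blast
  then have "?K \<subseteq> V - {vA, vB}" using component_subset[OF y(1)] by blast
  moreover have "neighbours ?K \<subseteq> insert vA ?K"
    using component_adjacent[OF y(1)] adjacent_in_V unfolding neighbours_def by blast
  ultimately have "generalized_tadpole E src tgt vA vB (insert vA ?K)"
    using closed_pocket_is_tadpole[of ?K vA vB] connected_component[OF y(1)] vA vB vA_neq_vB
    by blast
  then show False using no_tadpole vA \<open>?K \<subseteq> V - {vA, vB}\<close> by blast
qed

text \<open>If removing a vertex x of K that is adjacent to A disconnects B, the part cut off from vB
  lies in K - {x}, because B - K stays connected; it is a smaller pocket, with x in the role of v.\<close>
lemma pocket_has_removable_vertex:
  assumes cut: "AB_cut V E src tgt vA vB A B"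
    and K: "K \<subseteq> B" "vB \<notin> K" "connected_set E src tgt K" and v: "v \<in> B" "v \<notin> K"
    and closed: "neighbours K \<subseteq> insert v (K \<union> A)"
  shows "\<exists>x\<in>K. (\<exists>a\<in>A. adjacent a x) \<and> connected_set E src tgt (B - {x})"
  using K v closed
proof (induction "card K" arbitrary: K v rule: less_induct)
  case less
  have AB: "A \<union> B = V" "A \<inter> B = {}" "vA \<in> A" "vB \<in> B" "connected_set E src tgt B"
    using cut by (auto simp: AB_cut_def)
  have "\<exists>x a. x \<in> K \<and> a \<in> A \<and> adjacent a x"
  proof (rule ccontr)
    assume "\<nexists>x a. x \<in> K \<and> a \<in> A \<and> adjacent a x"
    then have "neighbours K \<subseteq> insert v K"
      using less.prems(6) adjacent_sym unfolding neighbours_def by blast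
    moreover have "K \<subseteq> V - {vA, vB}" "v \<in> V" "vA \<notin> insert v K"
      using less.prems AB by auto
    ultimately have "generalized_tadpole E src tgt vA vB (insert v K)"
      using closed_pocket_is_tadpole less.prems(3,5) vA by blast
    then show False using no_tadpole \<open>K \<subseteq> V - {vA, vB}\<close> \<open>v \<in> V\<close> by blast
  qed
  then obtain x a where x: "x \<in> K" and a: "a \<in> A" "adjacent a x" by blast
  show ?case
  proof (cases "connected_set E src tgt (B - {x})")
    case True
    then show ?thesis using x a by blast
  next
    case False
    have vB_Bx: "vB \<in> B - {x}" using x less.prems(2) AB(4) by blast
    then have "\<not> B - {x} \<subseteq> component (B - {x}) vB"
      using False connected_set_iff_subset_component by simp
    then obtain y where y: "y \<in> B - {x}" "y \<notin> component (B - {x}) vB" by blast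
    let ?K' = "component (B - {x}) y"
    have "B - K \<subseteq> component (B - {x}) vB"
    proof (rule connected_subset_component)
      show "connected_set E src tgt (B - K)"
        using connected_set_Diff_pocket[OF AB(5) less.prems(1,4,5)] less.prems(6) AB(2) by blast
    qed (use x less.prems(2) AB(4) in auto)
    moreover have "?K' \<inter> component (B - {x}) vB = {}"
      using y(2) component_eq root_in_component by (metis disjoint_iff)
    ultimately have K'_sub: "?K' \<subseteq> K - {x}"
      using component_subset[OF y(1)] by blast
    have "finite K" using less.prems(1) AB(1) finite_V finite_subset by blast
    then have "card ?K' < card K" using K'_sub x by (intro psubset_card_mono) auto
    moreover have "neighbours ?K' \<subseteq> insert x (?K' \<union> A)"
      using component_adjacent[OF y(1)] adjacent_in_V AB(1) unfolding neighbours_def by blast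
    moreover have "?K' \<subseteq> B" "vB \<notin> ?K'" "x \<in> B" "x \<notin> ?K'"
      using K'_sub less.prems(1,2) x by auto
    ultimately obtain x' where "x' \<in> ?K'" "\<exists>a\<in>A. adjacent a x'" "connected_set E src tgt (B - {x'})"
      using less.hyps connected_component[OF y(1)] by blast
    then show ?thesis using K'_sub by blast
  qed
qed

lemma removable_vertex_exists:
  assumes cut: "AB_cut V E src tgt vA vB A B" and "B \<noteq> {vB}"
  shows "\<exists>x\<in>B - {vB}. (\<exists>a\<in>A. adjacent a x) \<and> connected_set E src tgt (B - {x})"
proof -
  have AB: "A \<union> B = V" "vB \<in> B" using cut by (auto simp: AB_cut_def)
  then obtain y where y: "y \<in> B - {vB}" using assms(2) by blast
  let ?K = "component (B - {vB}) y"
  have "neighbours ?K \<subseteq> insert vB (?K \<union> A)"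
    using component_adjacent[OF y] adjacent_in_V AB(1) unfolding neighbours_def by blast
  moreover have "?K \<subseteq> B" "vB \<notin> ?K" using component_subset[OF y] by auto
  ultimately have "\<exists>x\<in>?K. (\<exists>a\<in>A. adjacent a x) \<and> connected_set E src tgt (B - {x})"
    using pocket_has_removable_vertex[OF cut] connected_component[OF y] AB(2) by blast
  then show ?thesis using component_subset[OF y] by blast
qed

lemma AB_cut_insert:
  assumes cut: "AB_cut V E src tgt vA vB A (V - A)" and "V - A \<noteq> {vB}"
  shows "\<exists>x\<in>V - A. AB_cut V E src tgt vA vB (insert x A) (V - insert x A)"
proof -
  obtain x a where x: "x \<in> V - A - {vB}" "connected_set E src tgt (V - A - {x})"
    and a: "a \<in> A" "adjacent a x"
    using removable_vertex_exists[OF assms] by blast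
  have "connected_set E src tgt (insert x A)"
    using cut a by (intro connected_set_insert) (auto simp: AB_cut_def)
  moreover have "V - insert x A = V - A - {x}" by blast
  ultimately have "AB_cut V E src tgt vA vB (insert x A) (V - insert x A)"
    using cut x by (auto simp: AB_cut_def)
  then show ?thesis using x by blast
qed

lemma AB_cut_vA: "AB_cut V E src tgt vA vB {vA} (V - {vA})"
proof -
  have "connected_set E src tgt {vA}"
    using connected_set_iff_subset_component[of vA "{vA}"] root_in_component by auto
  then show ?thesis using vA vB vA_neq_vB connected_V_minus_vA by (auto simp: AB_cut_def)
qed

lemma cut_chain_exists:
  assumes "1 \<le> k" "k \<le> card V - 1"
  shows "\<exists>f. f 0 = {} \<and> (\<forall>i<k. f i \<subset> f (Suc i)) \<and>
    (\<forall>p. 1 \<le> p \<and> p \<le> k \<longrightarrow> AB_cut V E src tgt vA vB (f p) (V - f p)) \<and> card (f k) = k"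
  using assms
proof (induction k rule: dec_induct)
  case base
  let ?f = "\<lambda>i::nat. if i = 0 then {} else {vA}"
  show ?case using AB_cut_vA by (intro exI[of _ ?f]) (auto simp: le_Suc_eq)
next
  case (step k)
  then obtain f where f: "f 0 = {}" "\<forall>i<k. f i \<subset> f (Suc i)"
    "\<forall>p. 1 \<le> p \<and> p \<le> k \<longrightarrow> AB_cut V E src tgt vA vB (f p) (V - f p)" "card (f k) = k"
    by auto
  have cut: "AB_cut V E src tgt vA vB (f k) (V - f k)" using f(3) step by auto
  then have "f k \<subseteq> V" by (auto simp: AB_cut_def)
  then have "card (V - f k) = card V - k"
    using f(4) finite_V by (simp add: card_Diff_subset finite_subset)
  then have "V - f k \<noteq> {vB}" using step by auto
  then obtain x where x: "x \<in> V - f k"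
    and cut': "AB_cut V E src tgt vA vB (insert x (f k)) (V - insert x (f k))"
    using AB_cut_insert[OF cut] by blast
  let ?g = "f(Suc k := insert x (f k))"
  have "card (insert x (f k)) = Suc k"
    using x f(4) \<open>f k \<subseteq> V\<close> finite_V by (simp add: finite_subset)
  moreover have "\<forall>i<Suc k. ?g i \<subset> ?g (Suc i)" using f(2) x by (auto simp: less_Suc_eq)
  moreover have "\<forall>p. 1 \<le> p \<and> p \<le> Suc k \<longrightarrow> AB_cut V E src tgt vA vB (?g p) (V - ?g p)"
    using f(3) cut' by (auto simp: le_Suc_eq)
  ultimately show ?case using f(1) by (intro exI[of _ ?g]) auto
qed

end

theorem lemma1:
  fixes V :: "'v set" and E :: "'e set" and src tgt :: "'e \<Rightarrow> 'v" and vA vB :: 'v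
  assumes "multigraph V E src tgt"
    and "connected_set E src tgt V"
    and "card V \<ge> 2"
    and "vA \<in> V" and "vB \<in> V" and "vA \<noteq> vB"
    and "degree E src tgt vA = 3" and "degree E src tgt vB = 3"
    and "\<forall>v\<in>V - {vA, vB}. degree E src tgt v = 4"
    and "\<not> (\<exists>S \<subseteq> V. generalized_tadpole E src tgt vA vB S)"
  shows "\<exists>A. exhausting_sequence_of_cuts V E src tgt vA vB A"
proof -
  interpret phi4_graph V E src tgt vA vB
    using assms by (simp add: phi4_graph_def)
  let ?n = "card V"
  have "1 \<le> ?n - 1" using assms(3) by linarith
  then obtain f where f: "f 0 = {}" "\<forall>i<?n - 1. f i \<subset> f (Suc i)"
    "\<forall>p. 1 \<le> p \<and> p \<le> ?n - 1 \<longrightarrow> AB_cut V E src tgt vA vB (f p) (V - f p)"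
    "card (f (?n - 1)) = ?n - 1"
    using cut_chain_exists[OF _ order.refl] by blast
  have "AB_cut V E src tgt vA vB (f (?n - 1)) (V - f (?n - 1))" using f(3) \<open>1 \<le> ?n - 1\<close> by blast
  then have "f (?n - 1) \<subseteq> V" unfolding AB_cut_def by blast
  then have "f (?n - 1) \<subset> V" using f(4) assms(3) by auto
  then have "\<forall>i<?n. (f(?n := V)) i \<subset> (f(?n := V)) (Suc i)"
    using f(2) by (metis Suc_pred' fun_upd_apply less_Suc_eq not_less_eq zero_less_iff_neq_zero)
  then have "exhausting_sequence_of_cuts V E src tgt vA vB (f(?n := V))"
    using f(1,3) assms(3) by (auto simp: exhausting_sequence_of_cuts_def)
  then show ?thesis by blast
qed

end
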